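(* If $G$ and $H$ are Left dead-ends, then $b(G+H)=b(G)+b(H)$.
   Context: Games are finite partizan games; $o(G)$ is the misère outcome class (ordered $\mathscr{L}>\mathscr{N}>\mathscr{R}$, $\mathscr{L}>\mathscr{P}>\mathscr{R}$). A universe is a set of games closed under options, disjunctive sums, conjugates, and forming $\{\mathscr{G}^L\mid\mathscr{G}^R\}$ from nonempty finite subsets of it; $G\geq_\mathcal{U}H$ means $o(G+X)\geq o(H+X)$ for all $X\in\mathcal{U}$. A Left dead-end is a game all of whose subpositions have no Left option. For Left dead-ends, $G\geq H$ means $G\geq_\mathcal{U}H$ for every universe $\mathcal{U}$, and $G=H$ means $G\geq H$ and $H\geq G$. The birthday $b(G)$ of a Left dead-end $G$ is the minimum height of the game tree of a Left dead-end $K$ with $K=G$. *)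

theory Defs
  imports Main "HOL-Library.FSet"
begin

text \<open>A finite partizan game is given by its finite set of Left options and its
finite set of Right options (games are identified as game trees, i.e. literal
form, not up to any equivalence).\<close>

datatype game = Game (lopts: "game fset") (ropts: "game fset")

lemma game_size_lopt: "x |\<in>| L \<Longrightarrow> size x < size (Game L R)"
  by (induction L) (auto simp: size_fset_overloaded_simps)

lemma game_size_ropt: "x |\<in>| R \<Longrightarrow> size x < size (Game L R)"
  by (induction R) (auto simp: size_fset_overloaded_simps)

lemma fimage_cong_fundef [fundef_cong]:
  "A = B \<Longrightarrow> (\<And>x. x |\<in>| B \<Longrightarrow> f x = g x) \<Longrightarrow> f |`| A = g |`| B"
  by (rule fset.map_cong)

function gsum :: "game \<Rightarrow> game \<Rightarrow> game" where
  "gsum (Game GL GR) (Game HL HR) =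
     Game ((\<lambda>x. gsum x (Game HL HR)) |`| GL |\<union>| (\<lambda>y. gsum (Game GL GR) y) |`| HL)
          ((\<lambda>x. gsum x (Game HL HR)) |`| GR |\<union>| (\<lambda>y. gsum (Game GL GR) y) |`| HR)"
  by pat_completeness auto
termination
  by (relation "measure (\<lambda>(g, h). size g + size h)")
     (auto dest: game_size_lopt game_size_ropt)

function conj :: "game \<Rightarrow> game" where
  "conj (Game GL GR) = Game (conj |`| GR) (conj |`| GL)"
  by pat_completeness auto
termination
  by (relation "measure size") (auto dest: game_size_lopt game_size_ropt)

text \<open>Misere play: a player who cannot move on their turn wins.
  \<open>left_wins_first G\<close>: Left wins moving first; \<open>left_wins_second G\<close>: Left wins
  when Right moves first.\<close>

function left_wins_first :: "game \<Rightarrow> bool" and left_wins_second :: "game \<Rightarrow> bool" where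
  "left_wins_first (Game GL GR) \<longleftrightarrow> GL = {||} \<or> (\<exists>x\<in>fset GL. left_wins_second x)"
| "left_wins_second (Game GL GR) \<longleftrightarrow> GR \<noteq> {||} \<and> (\<forall>y\<in>fset GR. left_wins_first y)"
  by pat_completeness auto
termination
  by (relation "measure (case_sum size size)") (auto dest: game_size_lopt game_size_ropt)

datatype outcome = OL | ON | OP | OR

definition outcome :: "game \<Rightarrow> outcome" where
  "outcome G = (if left_wins_first G then (if left_wins_second G then OL else ON)
                else (if left_wins_second G then OP else OR))"

definition outcome_le :: "outcome \<Rightarrow> outcome \<Rightarrow> bool" where
  "outcome_le a b \<longleftrightarrow> a = b \<or> a = OR \<or> b = OL"

definition is_option :: "game \<Rightarrow> game \<Rightarrow> bool" where
  "is_option x G \<longleftrightarrow> x |\<in>| lopts G \<or> x |\<in>| ropts G"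

definition universe :: "game set \<Rightarrow> bool" where
  "universe U \<longleftrightarrow>
     (\<forall>G\<in>U. \<forall>x. is_option x G \<longrightarrow> x \<in> U) \<and>
     (\<forall>G\<in>U. \<forall>H\<in>U. gsum G H \<in> U) \<and>
     (\<forall>G\<in>U. conj G \<in> U) \<and>
     (\<forall>A B. A \<noteq> {||} \<and> B \<noteq> {||} \<and> fset A \<subseteq> U \<and> fset B \<subseteq> U \<longrightarrow> Game A B \<in> U)"

definition game_ge_in :: "game set \<Rightarrow> game \<Rightarrow> game \<Rightarrow> bool" where
  "game_ge_in U G H \<longleftrightarrow> (\<forall>X\<in>U. outcome_le (outcome (gsum H X)) (outcome (gsum G X)))"

definition game_ge :: "game \<Rightarrow> game \<Rightarrow> bool" where
  "game_ge G H \<longleftrightarrow> (\<forall>U. universe U \<longrightarrow> game_ge_in U G H)"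

definition game_eq :: "game \<Rightarrow> game \<Rightarrow> bool" where
  "game_eq G H \<longleftrightarrow> game_ge G H \<and> game_ge H G"

definition subposition :: "game \<Rightarrow> game \<Rightarrow> bool" where
  "subposition K G \<longleftrightarrow> (\<lambda>x y. is_option x y)\<^sup>*\<^sup>* K G"

definition left_dead_end :: "game \<Rightarrow> bool" where
  "left_dead_end G \<longleftrightarrow> (\<forall>K. subposition K G \<longrightarrow> lopts K = {||})"

function height :: "game \<Rightarrow> nat" where
  "height (Game GL GR) =
     (if GL = {||} \<and> GR = {||} then 0
      else Suc (Max (fset (height |`| (GL |\<union>| GR)))))"
  by pat_completeness auto
termination
  by (relation "measure size") (auto dest: game_size_lopt game_size_ropt)

definition birthday :: "game \<Rightarrow> nat" where
  "birthday G = (LEAST n. \<exists>K. left_dead_end K \<and> game_eq K G \<and> height K = n)"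

end

theory Submission
  imports Defs
begin

text \<open>For a Left dead-end the birthday is just the height of its game tree; what has to be
  shown is that \<open>K \<ge> G\<close> for Left dead-ends forces \<open>height K \<le> height G\<close>. Add
  \<open>left_ladder n\<close> with \<open>n = height K\<close>, in which Left can move \<open>n\<close> times in a row while Right
  can end it at once. Moving second in \<open>X + left_ladder n\<close>, Left wins exactly when Right,
  playing alone in the dead-end \<open>X\<close>, cannot make exactly \<open>n\<close> moves and then be stuck. \<open>K\<close>
  admits such a run along a longest branch, so \<open>K \<ge> G\<close> forces \<open>G\<close> to admit one too, whence
  \<open>n \<le> height G\<close>. The theorem follows as height is additive under disjunctive sum and
  Left dead-ends are closed under it.\<close>

lemma game_option_induct [case_names option]:
  assumes "\<And>G. (\<And>x. is_option x G \<Longrightarrow> P x) \<Longrightarrow> P G"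
  shows "P G"
proof (induction G)
  case (Game GL GR)
  show ?case
    by (rule assms) (use Game.IH in \<open>auto simp: is_option_def\<close>)
qed

lemma gsum_option_induct [case_names option]:
  assumes "\<And>G H. (\<And>x. is_option x G \<Longrightarrow> P x H) \<Longrightarrow> (\<And>y. is_option y H \<Longrightarrow> P G y) \<Longrightarrow> P G H"
  shows "P G H"
proof (induction G H rule: gsum.induct)
  case (1 GL GR HL HR)
  show ?case
  proof (rule assms)
    show "P x (Game HL HR)" if "is_option x (Game GL GR)" for x
      using that "1.IH"(1,3) by (auto simp: is_option_def)
    show "P (Game GL GR) y" if "is_option y (Game HL HR)" for y
      using that "1.IH"(2,4) by (auto simp: is_option_def)
  qed
qed

lemma lopts_gsum: "lopts (gsum G H) = (\<lambda>x. gsum x H) |`| lopts G |\<union>| gsum G |`| lopts H"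
  by (cases G; cases H) simp

lemma ropts_gsum: "ropts (gsum G H) = (\<lambda>x. gsum x H) |`| ropts G |\<union>| gsum G |`| ropts H"
  by (cases G; cases H) simp

lemma is_option_gsum_iff:
  "is_option z (gsum G H) \<longleftrightarrow>
     (\<exists>x. is_option x G \<and> z = gsum x H) \<or> (\<exists>y. is_option y H \<and> z = gsum G y)"
  unfolding is_option_def lopts_gsum ropts_gsum by auto

lemma left_wins_first_iff:
  "left_wins_first G \<longleftrightarrow> lopts G = {||} \<or> (\<exists>x\<in>fset (lopts G). left_wins_second x)"
  by (cases G) simp

lemma left_wins_second_iff:
  "left_wins_second G \<longleftrightarrow> ropts G \<noteq> {||} \<and> (\<forall>y\<in>fset (ropts G). left_wins_first y)"
  by (cases G) simp

lemma left_wins_first_if_lopts_empty: "lopts G = {||} \<Longrightarrow> left_wins_first G"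
  by (simp add: left_wins_first_iff)

lemma height_le_iff: "height G \<le> n \<longleftrightarrow> (\<forall>x. is_option x G \<longrightarrow> height x < n)"
proof (cases G)
  case (Game GL GR)
  show ?thesis
  proof (cases "GL |\<union>| GR = {||}")
    case False
    then have "fset GL \<union> fset GR \<noteq> {}"
      by (metis bot_fset.rep_eq fset_inject union_fset)
    with Game show ?thesis
      by (auto simp: is_option_def Suc_le_eq)
  qed (use Game in \<open>auto simp: is_option_def\<close>)
qed

lemma height_option_less: "is_option x G \<Longrightarrow> height x < height G"
  using height_le_iff by blast

lemma height_eq_Suc_option:
  assumes "height G \<noteq> 0"
  obtains x where "is_option x G" "height G = Suc (height x)"
proof -
  obtain n where n: "height G = Suc n"
    using assms not0_implies_Suc by blast
  then obtain x where "is_option x G" "n \<le> height x"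
    using height_le_iff[of G n] by auto
  with n height_option_less[of x G] show ?thesis
    by (intro that) auto
qed

lemma height_gsum: "height (gsum G H) = height G + height H"
proof (induction G H rule: gsum_option_induct)
  case (option G H)
  have "height (gsum G H) \<le> height G + height H"
    unfolding height_le_iff is_option_gsum_iff
    using option.IH height_option_less by fastforce
  moreover have "height G + height H \<le> height (gsum G H)"
  proof (cases "height G = 0")
    case True
    show ?thesis
    proof (cases "height H = 0")
      case False
      then obtain y where y: "is_option y H" "height H = Suc (height y)"
        by (rule height_eq_Suc_option)
      then have "height (gsum G y) < height (gsum G H)"
        by (intro height_option_less) (auto simp: is_option_gsum_iff)
      with y option.IH show ?thesis by simp
    qed (use True in simp)
  next
    case False
    then obtain x where x: "is_option x G" "height G = Suc (height x)"
      by (rule height_eq_Suc_option)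
    then have "height (gsum x H) < height (gsum G H)"
      by (intro height_option_less) (auto simp: is_option_gsum_iff)
    with x option.IH show ?thesis by simp
  qed
  ultimately show ?case by (rule antisym)
qed

lemma subposition_iff: "subposition K G \<longleftrightarrow> K = G \<or> (\<exists>x. is_option x G \<and> subposition K x)"
  unfolding subposition_def by (subst rtranclp.simps) blast

lemma left_dead_end_iff:
  "left_dead_end G \<longleftrightarrow> lopts G = {||} \<and> (\<forall>x. is_option x G \<longrightarrow> left_dead_end x)"
  unfolding left_dead_end_def by (subst subposition_iff) blast

lemma left_dead_end_gsum:
  "left_dead_end G \<Longrightarrow> left_dead_end H \<Longrightarrow> left_dead_end (gsum G H)"
proof (induction G H rule: gsum_option_induct)
  case (option G H)
  then show ?case
    by (subst left_dead_end_iff)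
       (auto simp: lopts_gsum is_option_gsum_iff left_dead_end_iff[of G] left_dead_end_iff[of H])
qed

inductive right_path :: "game \<Rightarrow> nat \<Rightarrow> bool" where
  right_path_0: "ropts G = {||} \<Longrightarrow> right_path G 0"
| right_path_Suc: "x |\<in>| ropts G \<Longrightarrow> right_path x n \<Longrightarrow> right_path G (Suc n)"

lemma right_path_0_iff: "right_path G 0 \<longleftrightarrow> ropts G = {||}"
  by (auto elim: right_path.cases intro: right_path_0)

lemma right_path_Suc_iff: "right_path G (Suc n) \<longleftrightarrow> (\<exists>x\<in>fset (ropts G). right_path x n)"
  by (auto elim: right_path.cases intro: right_path_Suc)

lemma right_path_le_height: "right_path G n \<Longrightarrow> n \<le> height G"
proof (induction rule: right_path.induct)
  case (right_path_Suc x G n)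
  then have "height x < height G"
    by (intro height_option_less) (simp add: is_option_def)
  with right_path_Suc.IH show ?case by simp
qed simp

lemma right_path_height: "left_dead_end G \<Longrightarrow> right_path G (height G)"
proof (induction G rule: game_option_induct)
  case (option G)
  show ?case
  proof (cases "height G = 0")
    case True
    then show ?thesis
      using height_option_less[of _ G] by (auto simp: right_path_0_iff is_option_def)
  next
    case False
    then obtain x where x: "is_option x G" "height G = Suc (height x)"
      by (rule height_eq_Suc_option)
    from option.prems x(1) have "x |\<in>| ropts G" "left_dead_end x"
      by (auto simp: left_dead_end_iff[of G] is_option_def)
    with option.IH x show ?thesis
      by (auto intro: right_path_Suc)
  qed
qed

fun left_ladder :: "nat \<Rightarrow> game" where
  "left_ladder 0 = Game {||} {||}"
| "left_ladder (Suc n) = Game {|left_ladder n|} {|left_ladder 0|}"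

lemma left_wins_second_gsum_left_ladder:
  "left_dead_end G \<Longrightarrow> left_wins_second (gsum G (left_ladder n)) \<longleftrightarrow> \<not> right_path G n"
proof (induction n arbitrary: G)
  case 0
  then have "lopts x = {||}" if "x |\<in>| ropts G" for x
    using that by (auto simp: left_dead_end_iff[of G] left_dead_end_iff[of x] is_option_def)
  then show ?case
    by (auto simp: left_wins_second_iff right_path_0_iff ropts_gsum lopts_gsum
        intro: left_wins_first_if_lopts_empty)
next
  case (Suc n)
  have "left_wins_first (gsum x (left_ladder (Suc n))) \<longleftrightarrow> \<not> right_path x n"
    if "x |\<in>| ropts G" for x
  proof -
    from Suc.prems that have "left_dead_end x"
      by (auto simp: left_dead_end_iff[of G] is_option_def)
    with Suc.IH show ?thesis
      by (auto simp: left_wins_first_iff lopts_gsum left_dead_end_iff[of x])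
  qed
  moreover from Suc.prems have "left_wins_first (gsum G (left_ladder 0))"
    by (intro left_wins_first_if_lopts_empty) (simp add: lopts_gsum left_dead_end_iff[of G])
  ultimately show ?case
    by (auto simp: left_wins_second_iff right_path_Suc_iff ropts_gsum)
qed

lemma universe_UNIV: "universe UNIV"
  unfolding universe_def by simp

lemma outcome_le_left_wins_second:
  "outcome_le (outcome G) (outcome H) \<Longrightarrow> left_wins_second G \<Longrightarrow> left_wins_second H"
  unfolding outcome_le_def outcome_def by (auto split: if_splits)

lemma height_le_if_game_ge:
  assumes K: "left_dead_end K" and G: "left_dead_end G" and "game_ge K G"
  shows "height K \<le> height G"
proof (rule ccontr)
  assume "\<not> height K \<le> height G"
  then have "\<not> right_path G (height K)"
    using right_path_le_height by fastforce
  with G have "left_wins_second (gsum G (left_ladder (height K)))"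
    by (simp add: left_wins_second_gsum_left_ladder)
  moreover from K have "\<not> left_wins_second (gsum K (left_ladder (height K)))"
    by (simp add: left_wins_second_gsum_left_ladder right_path_height)
  moreover from \<open>game_ge K G\<close> universe_UNIV
  have "outcome_le (outcome (gsum G (left_ladder (height K)))) (outcome (gsum K (left_ladder (height K))))"
    unfolding game_ge_def game_ge_in_def by blast
  ultimately show False
    using outcome_le_left_wins_second by blast
qed

lemma game_eq_refl: "game_eq G G"
  by (simp add: game_eq_def game_ge_def game_ge_in_def outcome_le_def)

lemma birthday_eq_height:
  assumes "left_dead_end G"
  shows "birthday G = height G"
  unfolding birthday_def
proof (rule Least_equality)
  show "\<exists>K. left_dead_end K \<and> game_eq K G \<and> height K = height G"
    using assms game_eq_refl by blast
next
  fix n assume "\<exists>K. left_dead_end K \<and> game_eq K G \<and> height K = n"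
  with assms show "height G \<le> n"
    unfolding game_eq_def using height_le_if_game_ge by blast
qed

theorem mainTheorem13:
  assumes "left_dead_end G" and "left_dead_end H"
  shows "birthday (gsum G H) = birthday G + birthday H"
  using assms by (simp add: birthday_eq_height left_dead_end_gsum height_gsum)

end
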